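(* Let $n,m$ be positive integers, $A_1,\dots,A_m\in\mathbb{S}_n$, $\mathcal{A}(X)=(\langle A_i,X\rangle)_{i=1}^m$, $\mathcal{A}^*(y)=\sum_i y_iA_i$, with $\mathcal{A}\mathcal{A}^*$ invertible; let $b\in\mathbb{R}^m$, $C\in\mathbb{S}_n$, $D:=\mathcal{A}^*((\mathcal{A}\mathcal{A}^* )^{-1}b)$. Fix $\sigma_k>0$, $y^k\in\mathbb{R}^m$, $\widetilde{X}^k\in\mathbb{S}_n$, and let $$\Phi_k(S)=\langle D,S+C\rangle-\langle\widetilde{X}^k,\mathcal{A}^*(y^k)-S-C\rangle+\tfrac{\sigma_k}{2}\|\mathcal{A}^*(y^k)-S-C\|^2,\quad S\in\mathbb{S}_n,$$ so that $\nabla\Phi_k(S)=\widetilde{X}^k-\sigma_k(\mathcal{A}^*(y^k)-S-C)+D$. For each positive integer $q$ let $\mathcal{N}_q=\{Y\in\mathbb{R}^{n\times q}: \text{every row of }Y\text{ has Euclidean norm }1\}$ and $\Psi_k(Y)=\Phi_k(YY^{\intercal})$ for $Y\in\mathcal{N}_q$. Let $p$ be a positive integer, $Y\in\mathcal{N}_p$, $S=YY^{\intercal}$, and $X=\nabla\Phi_k(S)-\operatorname{Diag}(\nabla\Phi_k(S)S)$, and suppose $X\not\succeq0$. Let $\delta$ be a positive integer and let $V\in\mathbb{R}^{n\times\delta}$ be a matrix whose columns are eigenvectors of $X$ corresponding to negative eigenvalues. Set $\hat Y=[Y,\,0_{n\times\delta}]\in\mathcal{N}_{p+\delta}$ and $U=[0_{n\times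 p},\,V]$. Then $U$ is a tangent vector to $\mathcal{N}_{p+\delta}$ at $\hat Y$ and it is a second-order descent direction of $\Psi_k$ on $\mathcal{N}_{p+\delta}$ at $\hat Y$, namely $$\langle U,\operatorname{grad}\Psi_k(\hat Y)\rangle=0,\qquad\langle U,\operatorname{Hess}\Psi_k(\hat Y)[U]\rangle<0.$$
   Context: $\mathbb{S}_n$ denotes real symmetric $n\times n$ matrices, $\langle A,B\rangle=\mathrm{Tr}(A^{\intercal}B)$, $\|\cdot\|$ the Frobenius norm. For a square matrix $M$, $\operatorname{Diag}(M)$ is the diagonal matrix having the same diagonal as $M$. $\mathcal{N}_q$ (the oblique manifold) is regarded as a Riemannian submanifold of $\mathbb{R}^{n\times q}$ with the Frobenius inner product; $\operatorname{grad}$ and $\operatorname{Hess}$ denote the Riemannian gradient and Riemannian Hessian with respect to this induced metric. The tangent space at $Y$ is $\{U: \operatorname{diag}(UY^{\intercal})=0\}$. *)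

theory Defs
  imports Complex_Main "Jordan_Normal_Form.Char_Poly"
begin

(* Matrices are Jordan_Normal_Form matrices 'real mat' with explicit dimensions
   (dimensions p and p+delta occur in one statement, so type-indexed sizes are not usable). *)

definition mat_trace :: "real mat \<Rightarrow> real" where
  "mat_trace A = (\<Sum>i<dim_row A. A $$ (i,i))"

definition frob :: "real mat \<Rightarrow> real mat \<Rightarrow> real" where
  "frob A B = mat_trace (transpose_mat A * B)"

definition frob_norm :: "real mat \<Rightarrow> real" where
  "frob_norm A = sqrt (frob A A)"

definition sym_mat :: "nat \<Rightarrow> real mat \<Rightarrow> bool" where
  "sym_mat n A \<longleftrightarrow> A \<in> carrier_mat n n \<and> transpose_mat A = A"

definition psd :: "nat \<Rightarrow> real mat \<Rightarrow> bool" where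
  "psd n X \<longleftrightarrow> X \<in> carrier_mat n n \<and> (\<forall>v \<in> carrier_vec n. v \<bullet> (X *\<^sub>v v) \<ge> 0)"

definition Diag :: "real mat \<Rightarrow> real mat" where
  "Diag M = mat (dim_row M) (dim_col M) (\<lambda>(i,j). if i = j then M $$ (i,i) else 0)"

definition mat_inv :: "real mat \<Rightarrow> real mat" where
  "mat_inv M = (SOME B. B \<in> carrier_mat (dim_row M) (dim_row M)
       \<and> M * B = 1\<^sub>m (dim_row M) \<and> B * M = 1\<^sub>m (dim_row M))"

definition opA :: "nat \<Rightarrow> (nat \<Rightarrow> real mat) \<Rightarrow> real mat \<Rightarrow> real vec" where
  "opA m As X = vec m (\<lambda>i. frob (As i) X)"

definition opAstar :: "nat \<Rightarrow> nat \<Rightarrow> (nat \<Rightarrow> real mat) \<Rightarrow> real vec \<Rightarrow> real mat" where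
  "opAstar n m As y = mat n n (\<lambda>(r,c). \<Sum>i<m. y $ i * As i $$ (r,c))"

definition opAAstar :: "nat \<Rightarrow> (nat \<Rightarrow> real mat) \<Rightarrow> real mat" where
  "opAAstar m As = mat m m (\<lambda>(i,j). frob (As i) (As j))"

definition Dmat :: "nat \<Rightarrow> nat \<Rightarrow> (nat \<Rightarrow> real mat) \<Rightarrow> real vec \<Rightarrow> real mat" where
  "Dmat n m As b = opAstar n m As (mat_inv (opAAstar m As) *\<^sub>v b)"

definition Phi :: "nat \<Rightarrow> nat \<Rightarrow> (nat \<Rightarrow> real mat) \<Rightarrow> real vec \<Rightarrow> real mat \<Rightarrow> real
    \<Rightarrow> real vec \<Rightarrow> real mat \<Rightarrow> real mat \<Rightarrow> real" where
  "Phi n m As b C \<sigma> y Xt S =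
     frob (Dmat n m As b) (S + C)
     - frob Xt (opAstar n m As y - S - C)
     + \<sigma> / 2 * (frob_norm (opAstar n m As y - S - C))\<^sup>2"

definition gradPhi :: "nat \<Rightarrow> nat \<Rightarrow> (nat \<Rightarrow> real mat) \<Rightarrow> real vec \<Rightarrow> real mat \<Rightarrow> real
    \<Rightarrow> real vec \<Rightarrow> real mat \<Rightarrow> real mat \<Rightarrow> real mat" where
  "gradPhi n m As b C \<sigma> y Xt S =
     Xt - \<sigma> \<cdot>\<^sub>m (opAstar n m As y - S - C) + Dmat n m As b"

definition Psi :: "nat \<Rightarrow> nat \<Rightarrow> (nat \<Rightarrow> real mat) \<Rightarrow> real vec \<Rightarrow> real mat \<Rightarrow> real
    \<Rightarrow> real vec \<Rightarrow> real mat \<Rightarrow> real mat \<Rightarrow> real" where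
  "Psi n m As b C \<sigma> y Xt Y = Phi n m As b C \<sigma> y Xt (Y * transpose_mat Y)"

definition obl :: "nat \<Rightarrow> nat \<Rightarrow> real mat set" where
  "obl n q = {Y \<in> carrier_mat n q. \<forall>i<n. sqrt (\<Sum>j<q. (Y $$ (i,j))\<^sup>2) = 1}"

definition tangent_obl :: "nat \<Rightarrow> nat \<Rightarrow> real mat \<Rightarrow> real mat set" where
  "tangent_obl n q Y = {U \<in> carrier_mat n q. \<forall>i<n. (U * transpose_mat Y) $$ (i,i) = 0}"

(* orthogonal projection of R^{n x q} onto the tangent space at Y (Frobenius metric) *)
definition proj_obl :: "real mat \<Rightarrow> real mat \<Rightarrow> real mat" where
  "proj_obl Y Z = Z - Diag (Z * transpose_mat Y) * Y"

definition mat_curve_deriv :: "nat \<Rightarrow> nat \<Rightarrow> (real \<Rightarrow> real mat) \<Rightarrow> real \<Rightarrow> real mat \<Rightarrow> bool" where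
  "mat_curve_deriv r c \<gamma> t0 M \<longleftrightarrow> M \<in> carrier_mat r c \<and> (\<forall>t. \<gamma> t \<in> carrier_mat r c) \<and>
     (\<forall>i<r. \<forall>j<c. ((\<lambda>t. \<gamma> t $$ (i,j)) has_real_derivative M $$ (i,j)) (at t0))"

definition obl_curve :: "nat \<Rightarrow> nat \<Rightarrow> real mat \<Rightarrow> real mat \<Rightarrow> (real \<Rightarrow> real mat) \<Rightarrow> bool" where
  "obl_curve n q Y U \<gamma> \<longleftrightarrow> (\<forall>t. \<gamma> t \<in> obl n q) \<and> \<gamma> 0 = Y \<and> mat_curve_deriv n q \<gamma> 0 U"

(* Riemannian gradient of f on N_q (induced Frobenius metric) at Y: the tangent vector G
   representing the differential, i.e. (f o gamma)'(0) = <G, gamma'(0)> for every curve. *)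
definition is_rgrad :: "nat \<Rightarrow> nat \<Rightarrow> (real mat \<Rightarrow> real) \<Rightarrow> real mat \<Rightarrow> real mat \<Rightarrow> bool" where
  "is_rgrad n q f Y G \<longleftrightarrow> G \<in> tangent_obl n q Y \<and>
     (\<forall>U \<gamma>. obl_curve n q Y U \<gamma> \<longrightarrow> ((\<lambda>t. f (\<gamma> t)) has_real_derivative frob G U) (at 0))"

(* Riemannian Hessian on the Riemannian submanifold N_q: Levi-Civita covariant derivative of
   the gradient field along U, i.e. Hess f(Y)[U] = Proj_Y ( d/dt grad f(gamma(t)) |_{t=0} )
   for curves gamma on N_q with gamma(0) = Y, gamma'(0) = U. *)
definition is_rhess :: "nat \<Rightarrow> nat \<Rightarrow> (real mat \<Rightarrow> real) \<Rightarrow> real mat \<Rightarrow> real mat \<Rightarrow> real mat \<Rightarrow> bool" where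
  "is_rhess n q f Y U H \<longleftrightarrow> U \<in> tangent_obl n q Y \<and>
     (\<exists>g. (\<forall>Z \<in> obl n q. is_rgrad n q f Z (g Z)) \<and>
        (\<forall>\<gamma>. obl_curve n q Y U \<gamma> \<longrightarrow>
           (\<exists>W. mat_curve_deriv n q (\<lambda>t. g (\<gamma> t)) 0 W \<and> H = proj_obl Y W)))"

end

theory Submission
  imports Defs
begin

text \<open>With \<open>S = Y Y\<^sup>T\<close>, the Euclidean gradient of \<open>Y \<mapsto> \<Phi>(Y Y\<^sup>T)\<close> is \<open>2 \<nabla>\<Phi>(S) Y\<close>; its
  projection onto the tangent space of the oblique manifold is \<open>grad \<Psi>(Y) = 2 X Y\<close> with
  \<open>X = \<nabla>\<Phi>(S) - Diag(\<nabla>\<Phi>(S) S)\<close>. Padding \<open>Y\<close> by zero columns to \<open>Yh = [Y, 0]\<close> does not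
  change \<open>S\<close>, and \<open>U = [0, V]\<close> satisfies \<open>Yh U\<^sup>T = 0\<close>. Hence
  \<open>\<langle>U, grad \<Psi>(Yh)\<rangle> = 2 \<langle>X, U Yh\<^sup>T\<rangle> = 0\<close>, and along every curve through \<open>Yh\<close> with velocity
  \<open>U\<close> the Gram matrix, hence \<open>X\<close>, is stationary at \<open>t = 0\<close>. So the gradient field has derivative
  \<open>2 X U\<close> there, and since \<open>U\<close> is orthogonal to the normal space,
  \<open>\<langle>U, Hess \<Psi>(Yh)[U]\<rangle> = 2 \<langle>X U, U\<rangle> = 2 \<Sum>\<^sub>j \<lambda>\<^sub>j |v\<^sub>j|\<^sup>2 < 0\<close>.\<close>

section \<open>The Frobenius inner product\<close>

lemma frob_eq_sum:
  assumes "A \<in> carrier_mat r c" "B \<in> carrier_mat r c"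
  shows "frob A B = (\<Sum>i<r. \<Sum>j<c. A $$ (i,j) * B $$ (i,j))"
proof -
  have "frob A B = (\<Sum>j<c. \<Sum>i<r. A $$ (i,j) * B $$ (i,j))"
    using assms unfolding frob_def mat_trace_def
    by (auto simp: scalar_prod_def lessThan_atLeast0 intro!: sum.cong)
  then show ?thesis by (simp add: sum.swap[of _ "{..<c}"])
qed

lemma frob_eq_sum_col:
  assumes "A \<in> carrier_mat r c" "B \<in> carrier_mat r c"
  shows "frob A B = (\<Sum>j<c. col A j \<bullet> col B j)"
  using assms unfolding frob_def mat_trace_def by (auto intro!: sum.cong)

lemma frob_self_nonneg: "frob A A \<ge> 0"
  unfolding frob_def mat_trace_def
  by (auto intro!: sum_nonneg simp: scalar_prod_def)

lemma frob_norm_square: "(frob_norm A)\<^sup>2 = frob A A"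
  unfolding frob_norm_def using frob_self_nonneg by simp

lemma frob_comm:
  assumes "A \<in> carrier_mat r c" "B \<in> carrier_mat r c"
  shows "frob A B = frob B A"
  using assms by (simp add: frob_eq_sum mult.commute)

lemma frob_transpose:
  assumes "A \<in> carrier_mat r c" "B \<in> carrier_mat r c"
  shows "frob (transpose_mat A) (transpose_mat B) = frob A B"
  using assms by (simp add: frob_eq_sum sum.swap[of _ "{..<c}"])

lemma frob_add_right:
  assumes "A \<in> carrier_mat r c" "B \<in> carrier_mat r c" "C \<in> carrier_mat r c"
  shows "frob A (B + C) = frob A B + frob A C"
  using assms by (simp add: frob_eq_sum sum.distrib distrib_left)

lemma frob_diff_left:
  assumes "A \<in> carrier_mat r c" "B \<in> carrier_mat r c" "C \<in> carrier_mat r c"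
  shows "frob (A - B) C = frob A C - frob B C"
  using assms
  by (simp add: minus_carrier_mat frob_eq_sum[of "A - B" r c] frob_eq_sum[of A r c]
      frob_eq_sum[of B r c] sum_subtractf left_diff_distrib)

lemma frob_smult_left:
  assumes "A \<in> carrier_mat r c" "B \<in> carrier_mat r c"
  shows "frob (a \<cdot>\<^sub>m A) B = a * frob A B"
  using assms
  by (simp add: frob_eq_sum[of "a \<cdot>\<^sub>m A" r c] frob_eq_sum[of A r c] sum_distrib_left mult.assoc)

lemma frob_mult_transpose_right:
  assumes "A \<in> carrier_mat r k" "B \<in> carrier_mat k c" "C \<in> carrier_mat r c"
  shows "frob A (C * transpose_mat B) = frob (A * B) C"
proof -
  have "frob A (C * transpose_mat B)
      = (\<Sum>i<r. \<Sum>j<k. \<Sum>l<c. A $$ (i,j) * C $$ (i,l) * B $$ (j,l))"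
    using assms
    by (simp add: frob_eq_sum scalar_prod_def sum_distrib_left lessThan_atLeast0 mult.assoc)
  also have "\<dots> = (\<Sum>i<r. \<Sum>l<c. \<Sum>j<k. A $$ (i,j) * B $$ (j,l) * C $$ (i,l))"
    by (auto intro!: sum.cong simp: sum.swap[of _ "{..<k}"] ac_simps)
  also have "\<dots> = frob (A * B) C"
    using assms
    by (simp add: frob_eq_sum[of "A * B" r c] scalar_prod_def sum_distrib_right lessThan_atLeast0)
  finally show ?thesis .
qed

lemma frob_sym_gram_deriv:
  assumes "G \<in> carrier_mat n n" "transpose_mat G = G" "Z \<in> carrier_mat n q" "U \<in> carrier_mat n q"
  shows "frob G (U * transpose_mat Z + Z * transpose_mat U) = 2 * frob (G * Z) U"
proof -
  have "frob G (Z * transpose_mat U) = frob (transpose_mat G) (transpose_mat (Z * transpose_mat U))"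
    using assms by (intro frob_transpose[symmetric]) auto
  also have "\<dots> = frob G (U * transpose_mat Z)"
    using assms by (simp add: transpose_mult[of Z n q])
  finally show ?thesis
    using assms by (simp add: frob_add_right frob_mult_transpose_right)
qed

lemma frob_self_eq_0_iff:
  assumes "A \<in> carrier_mat r c"
  shows "frob A A = 0 \<longleftrightarrow> A = 0\<^sub>m r c"
proof
  assume "frob A A = 0"
  then have "\<forall>i<r. \<forall>j<c. A $$ (i,j) * A $$ (i,j) = 0"
    using assms by (simp add: frob_eq_sum sum_nonneg sum_nonneg_eq_0_iff)
  then show "A = 0\<^sub>m r c"
    using assms by (intro eq_matI) auto
qed (simp add: frob_eq_sum[of _ r c])

section \<open>Derivatives of matrix curves\<close>

lemma mat_curve_deriv_dim:
  assumes "mat_curve_deriv r c \<gamma> t0 M"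
  shows "dim_row (\<gamma> t) = r" "dim_col (\<gamma> t) = c" "\<gamma> t \<in> carrier_mat r c" "M \<in> carrier_mat r c"
  using assms unfolding mat_curve_deriv_def by auto

lemma mat_curve_deriv_unique:
  assumes "mat_curve_deriv r c \<gamma> t0 M" "mat_curve_deriv r c \<gamma> t0 M'"
  shows "M = M'"
  using assms DERIV_unique unfolding mat_curve_deriv_def by (metis eq_matI carrier_matD)

lemma mat_curve_deriv_diff:
  assumes "mat_curve_deriv r c A t0 A'" "mat_curve_deriv r c B t0 B'"
  shows "mat_curve_deriv r c (\<lambda>t. A t - B t) t0 (A' - B')"
  using assms mat_curve_deriv_dim[OF assms(1)] mat_curve_deriv_dim[OF assms(2)]
  unfolding mat_curve_deriv_def by (auto simp: minus_carrier_mat intro!: derivative_eq_intros)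

lemma mat_curve_deriv_smult:
  assumes "mat_curve_deriv r c A t0 A'"
  shows "mat_curve_deriv r c (\<lambda>t. a \<cdot>\<^sub>m A t) t0 (a \<cdot>\<^sub>m A')"
  using assms mat_curve_deriv_dim[OF assms]
  unfolding mat_curve_deriv_def by (auto intro!: derivative_eq_intros)

lemma mat_curve_deriv_transpose:
  assumes "mat_curve_deriv r c A t0 A'"
  shows "mat_curve_deriv c r (\<lambda>t. transpose_mat (A t)) t0 (transpose_mat A')"
  using assms mat_curve_deriv_dim[OF assms] unfolding mat_curve_deriv_def by auto

lemma mat_curve_deriv_mult:
  assumes A: "mat_curve_deriv r k A t0 A'" and B: "mat_curve_deriv k c B t0 B'"
  shows "mat_curve_deriv r c (\<lambda>t. A t * B t) t0 (A' * B t0 + A t0 * B')"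
  unfolding mat_curve_deriv_def
proof (intro conjI allI impI)
  note dims = mat_curve_deriv_dim[OF A] mat_curve_deriv_dim[OF B]
  fix i j assume ij: "i < r" "j < c"
  have "(\<lambda>t. (A t * B t) $$ (i,j)) = (\<lambda>t. \<Sum>l<k. A t $$ (i,l) * B t $$ (l,j))"
    using dims ij by (auto simp: scalar_prod_def lessThan_atLeast0 intro!: sum.cong)
  moreover have "((\<lambda>t. \<Sum>l<k. A t $$ (i,l) * B t $$ (l,j)) has_real_derivative
      (\<Sum>l<k. A' $$ (i,l) * B t0 $$ (l,j) + B' $$ (l,j) * A t0 $$ (i,l))) (at t0)"
    using A B ij unfolding mat_curve_deriv_def by (auto intro!: derivative_eq_intros)
  ultimately show "((\<lambda>t. (A t * B t) $$ (i,j)) has_real_derivative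
      (A' * B t0 + A t0 * B') $$ (i,j)) (at t0)"
    using dims ij by (simp add: scalar_prod_def lessThan_atLeast0 sum.distrib mult.commute)
qed (use mat_curve_deriv_dim[OF A] mat_curve_deriv_dim[OF B] in auto)

lemma mat_curve_deriv_Diag:
  assumes "mat_curve_deriv n n A t0 A'"
  shows "mat_curve_deriv n n (\<lambda>t. Diag (A t)) t0 (Diag A')"
  unfolding mat_curve_deriv_def
proof (intro conjI allI impI)
  note dims = mat_curve_deriv_dim[OF assms]
  fix i j assume "i < n" "j < n"
  then show "((\<lambda>t. Diag (A t) $$ (i,j)) has_real_derivative Diag A' $$ (i,j)) (at t0)"
    using assms dims unfolding mat_curve_deriv_def Diag_def by auto
qed (use mat_curve_deriv_dim[OF assms] in \<open>auto simp: Diag_def\<close>)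

lemma mat_curve_deriv_gram:
  assumes "mat_curve_deriv r c \<gamma> t0 U"
  shows "mat_curve_deriv r r (\<lambda>t. \<gamma> t * transpose_mat (\<gamma> t)) t0
    (U * transpose_mat (\<gamma> t0) + \<gamma> t0 * transpose_mat U)"
  using mat_curve_deriv_mult[OF assms mat_curve_deriv_transpose[OF assms]] .

section \<open>Diagonal parts, symmetry and the oblique manifold\<close>

lemma dim_Diag [simp]: "dim_row (Diag M) = dim_row M" "dim_col (Diag M) = dim_col M"
  unfolding Diag_def by simp_all

lemma Diag_zero_mat [simp]: "Diag (0\<^sub>m n n) = 0\<^sub>m n n"
  unfolding Diag_def by auto

lemma Diag_carrier_mat [simp]: "M \<in> carrier_mat r c \<Longrightarrow> Diag M \<in> carrier_mat r c"
  unfolding Diag_def by auto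

lemma index_Diag_mult:
  assumes "M \<in> carrier_mat n n" "A \<in> carrier_mat n c" "i < n" "j < c"
  shows "(Diag M * A) $$ (i,j) = M $$ (i,i) * A $$ (i,j)"
proof -
  have "(Diag M * A) $$ (i,j) = (\<Sum>l<n. (if i = l then M $$ (i,i) else 0) * A $$ (l,j))"
    using assms unfolding Diag_def
    by (auto simp: scalar_prod_def lessThan_atLeast0 intro!: sum.cong)
  also have "\<dots> = M $$ (i,i) * A $$ (i,j)"
    using assms(3) by (simp add: if_distrib[of "\<lambda>x. x * _"] cong: if_cong)
  finally show ?thesis .
qed

lemma sym_matI:
  "A \<in> carrier_mat n n \<Longrightarrow> (\<And>i j. i < n \<Longrightarrow> j < n \<Longrightarrow> A $$ (j,i) = A $$ (i,j)) \<Longrightarrow> sym_mat n A"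
  unfolding sym_mat_def by (auto intro!: eq_matI)

lemma sym_matD: "sym_mat n A \<Longrightarrow> i < n \<Longrightarrow> j < n \<Longrightarrow> A $$ (j,i) = A $$ (i,j)"
  unfolding sym_mat_def by (metis carrier_matD index_transpose_mat(1))

lemma sym_mat_opAstar: "\<forall>i<m. sym_mat n (As i) \<Longrightarrow> sym_mat n (opAstar n m As v)"
  unfolding opAstar_def by (intro sym_matI) (auto intro!: sum.cong simp: sym_matD)

lemma sym_mat_gram: "Z \<in> carrier_mat n q \<Longrightarrow> sym_mat n (Z * transpose_mat Z)"
  unfolding sym_mat_def by (simp add: transpose_mult[of Z n q])

lemma mult_transpose_eq_0_swap:
  fixes Z U :: "'a :: comm_semiring_0 mat"
  assumes "Z \<in> carrier_mat n q" "U \<in> carrier_mat n q" "Z * transpose_mat U = 0\<^sub>m n n"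
  shows "U * transpose_mat Z = 0\<^sub>m n n"
  using arg_cong[OF assms(3), of transpose_mat] assms(1,2) by (simp add: transpose_mult[of Z n q])

lemma tangent_obl_if_orthogonal:
  assumes "Z \<in> carrier_mat n q" "U \<in> carrier_mat n q" "Z * transpose_mat U = 0\<^sub>m n n"
  shows "U \<in> tangent_obl n q Z"
  using mult_transpose_eq_0_swap[OF assms] assms(2) unfolding tangent_obl_def by simp

lemma obl_carrier: "Z \<in> obl n q \<Longrightarrow> Z \<in> carrier_mat n q"
  unfolding obl_def by blast

lemma obl_gram_diag:
  assumes "Z \<in> obl n q" "i < n"
  shows "(Z * transpose_mat Z) $$ (i,i) = 1"
proof -
  have "sqrt (\<Sum>j<q. (Z $$ (i,j))\<^sup>2) = 1"
    using assms unfolding obl_def by blast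
  then have "(\<Sum>j<q. (Z $$ (i,j))\<^sup>2) = 1"
    by simp
  then show ?thesis
    using assms obl_carrier[OF assms(1)]
    by (simp add: scalar_prod_def lessThan_atLeast0 power2_eq_square)
qed

lemma tangent_obl_carrier: "U \<in> tangent_obl n q Z \<Longrightarrow> U \<in> carrier_mat n q"
  unfolding tangent_obl_def by blast

lemma frob_Diag_mult_tangent:
  assumes Z: "Z \<in> carrier_mat n q" and U: "U \<in> tangent_obl n q Z" and M: "M \<in> carrier_mat n n"
  shows "frob (Diag M * Z) U = 0"
proof -
  have Uc: "U \<in> carrier_mat n q"
    using U by (rule tangent_obl_carrier)
  have "Diag M * Z \<in> carrier_mat n q"
    using mult_carrier_mat[OF Diag_carrier_mat[OF M] Z] .
  then have "frob (Diag M * Z) U = (\<Sum>i<n. \<Sum>j<q. M $$ (i,i) * Z $$ (i,j) * U $$ (i,j))"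
    using Z Uc M by (simp add: frob_eq_sum[of _ n q] index_Diag_mult del: index_mult_mat)
  also have "\<dots> = (\<Sum>i<n. M $$ (i,i) * (U * transpose_mat Z) $$ (i,i))"
    using Z Uc
    by (auto simp: scalar_prod_def lessThan_atLeast0 sum_distrib_left ac_simps intro!: sum.cong)
  also have "\<dots> = 0"
    using U unfolding tangent_obl_def by simp
  finally show ?thesis .
qed

lemma proj_obl_carrier:
  "Z \<in> carrier_mat n q \<Longrightarrow> W \<in> carrier_mat n q \<Longrightarrow> proj_obl Z W \<in> carrier_mat n q"
  unfolding proj_obl_def Diag_def by (auto simp: minus_carrier_mat)

lemma proj_obl_tangent:
  assumes Z: "Z \<in> obl n q" and W: "W \<in> carrier_mat n q"
  shows "proj_obl Z W \<in> tangent_obl n q Z"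
proof -
  have Zc: "Z \<in> carrier_mat n q"
    using Z by (rule obl_carrier)
  have D: "Diag (W * transpose_mat Z) \<in> carrier_mat n n"
    using Zc W by simp
  have DZ: "Diag (W * transpose_mat Z) * Z \<in> carrier_mat n q"
    using D Zc by (rule mult_carrier_mat)
  have "(proj_obl Z W * transpose_mat Z) $$ (i,i) = 0" if "i < n" for i
  proof -
    have "proj_obl Z W * transpose_mat Z
        = W * transpose_mat Z - Diag (W * transpose_mat Z) * Z * transpose_mat Z"
      unfolding proj_obl_def using Zc W DZ by (intro minus_mult_distrib_mat[of W n q]) auto
    also have "\<dots> = W * transpose_mat Z - Diag (W * transpose_mat Z) * (Z * transpose_mat Z)"
      using Zc D by (simp add: assoc_mult_mat[of _ n n _ q])
    finally have "proj_obl Z W * transpose_mat Z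
        = W * transpose_mat Z - Diag (W * transpose_mat Z) * (Z * transpose_mat Z)" .
    moreover have "(Diag (W * transpose_mat Z) * (Z * transpose_mat Z)) $$ (i,i)
        = (W * transpose_mat Z) $$ (i,i)"
      using index_Diag_mult[of "W * transpose_mat Z" n "Z * transpose_mat Z" n i i] Zc W that
        obl_gram_diag[OF Z that]
      by (simp del: index_mult_mat)
    ultimately show ?thesis
      using that Zc W by simp
  qed
  then show ?thesis
    unfolding tangent_obl_def using proj_obl_carrier[OF Zc W] by blast
qed

lemma frob_proj_obl:
  assumes Z: "Z \<in> carrier_mat n q" and U: "U \<in> tangent_obl n q Z" and W: "W \<in> carrier_mat n q"
  shows "frob (proj_obl Z W) U = frob W U"
proof -
  have "Diag (W * transpose_mat Z) * Z \<in> carrier_mat n q"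
    using Z W by (intro mult_carrier_mat[of _ n n]) simp_all
  then show ?thesis
    using frob_Diag_mult_tangent[OF Z U, of "W * transpose_mat Z"] Z W tangent_obl_carrier[OF U]
    unfolding proj_obl_def by (simp add: frob_diff_left[of W n q])
qed

lemma obl_curve_tangent:
  assumes "obl_curve n q Z U \<gamma>"
  shows "U \<in> tangent_obl n q Z"
proof -
  have \<gamma>: "\<And>t. \<gamma> t \<in> obl n q" "\<gamma> 0 = Z" and d: "mat_curve_deriv n q \<gamma> 0 U"
    using assms unfolding obl_curve_def by auto
  have Zc: "Z \<in> carrier_mat n q" and Uc: "U \<in> carrier_mat n q"
    using mat_curve_deriv_dim[OF d] \<gamma>(2) by auto
  have gram: "mat_curve_deriv n n (\<lambda>t. \<gamma> t * transpose_mat (\<gamma> t)) 0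
      (U * transpose_mat Z + Z * transpose_mat U)"
    using mat_curve_deriv_gram[OF d] \<gamma>(2) by simp
  have "(U * transpose_mat Z) $$ (i,i) = 0" if i: "i < n" for i
  proof -
    have "((\<lambda>t. (\<gamma> t * transpose_mat (\<gamma> t)) $$ (i,i)) has_real_derivative
        (U * transpose_mat Z + Z * transpose_mat U) $$ (i,i)) (at 0)"
      using gram i unfolding mat_curve_deriv_def by blast
    moreover have "(\<lambda>t. (\<gamma> t * transpose_mat (\<gamma> t)) $$ (i,i)) = (\<lambda>t. 1)"
      using obl_gram_diag[OF \<gamma>(1) i] by simp
    ultimately have "(U * transpose_mat Z + Z * transpose_mat U) $$ (i,i) = 0"
      using DERIV_const DERIV_unique by metis
    moreover have "(Z * transpose_mat U) $$ (i,i) = (U * transpose_mat Z) $$ (i,i)"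
      using Zc Uc i by (simp add: comm_scalar_prod[of _ q])
    ultimately show ?thesis
      using Zc Uc i by simp
  qed
  then show ?thesis
    unfolding tangent_obl_def using Uc by blast
qed

lemma obl_curve_exists:
  assumes Z: "Z \<in> obl n q" and U: "U \<in> tangent_obl n q Z"
  shows "\<exists>\<gamma>. obl_curve n q Z U \<gamma>"
proof -
  have Zc: "Z \<in> carrier_mat n q" and Uc: "U \<in> carrier_mat n q"
    using Z U by (auto simp: obl_carrier tangent_obl_carrier)
  txt \<open>Normalise the rows of \<open>Z + t U\<close>; by tangency row \<open>i\<close> has length \<open>\<nu> t i\<close>.\<close>
  define \<nu> where "\<nu> t i = sqrt (1 + t\<^sup>2 * (\<Sum>k<q. (U $$ (i,k))\<^sup>2))" for t i
  define \<gamma> where "\<gamma> t = mat n q (\<lambda>(i,j). (Z $$ (i,j) + t * U $$ (i,j)) / \<nu> t i)" for t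
  have \<nu>_pos: "1 + t\<^sup>2 * (\<Sum>k<q. (U $$ (i,k))\<^sup>2) > 0" for t i
    by (intro add_pos_nonneg mult_nonneg_nonneg sum_nonneg) auto
  have "\<gamma> t \<in> obl n q" for t
  proof -
    have "(\<Sum>j<q. ((Z $$ (i,j) + t * U $$ (i,j)) / \<nu> t i)\<^sup>2) = 1" if i: "i < n" for i
    proof -
      have "(Z * transpose_mat Z) $$ (i,i) = 1" "(U * transpose_mat Z) $$ (i,i) = 0"
        using obl_gram_diag[OF Z i] U i unfolding tangent_obl_def by auto
      then have "(\<Sum>j<q. Z $$ (i,j) * Z $$ (i,j)) = 1" "(\<Sum>j<q. U $$ (i,j) * Z $$ (i,j)) = 0"
        using Zc Uc i by (simp_all add: scalar_prod_def lessThan_atLeast0 power2_eq_square)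
      moreover have "(\<Sum>j<q. (Z $$ (i,j) + t * U $$ (i,j))\<^sup>2) = (\<Sum>j<q. Z $$ (i,j) * Z $$ (i,j))
          + 2 * t * (\<Sum>j<q. U $$ (i,j) * Z $$ (i,j)) + t\<^sup>2 * (\<Sum>k<q. (U $$ (i,k))\<^sup>2)"
        by (simp add: power2_eq_square algebra_simps sum.distrib sum_distrib_left)
      ultimately have "(\<Sum>j<q. (Z $$ (i,j) + t * U $$ (i,j))\<^sup>2) = (\<nu> t i)\<^sup>2"
        using \<nu>_pos[of t i] unfolding \<nu>_def by (simp add: power2_eq_square)
      then show ?thesis
        using \<nu>_pos[of t i] unfolding \<nu>_def by (simp add: power_divide flip: sum_divide_distrib)
    qed
    then show ?thesis
      unfolding obl_def \<gamma>_def by auto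
  qed
  moreover have "\<gamma> 0 = Z"
    using Zc unfolding \<gamma>_def \<nu>_def by auto
  moreover have "((\<lambda>t. \<gamma> t $$ (i,j)) has_real_derivative U $$ (i,j)) (at 0)" if "i < n" "j < q" for i j
  proof -
    have "((\<lambda>t. (Z $$ (i,j) + t * U $$ (i,j)) / \<nu> t i) has_real_derivative U $$ (i,j)) (at 0)"
      unfolding \<nu>_def by (rule derivative_eq_intros refl | simp add: \<nu>_pos)+
    then show ?thesis
      using that unfolding \<gamma>_def by simp
  qed
  ultimately have "obl_curve n q Z U \<gamma>"
    unfolding obl_curve_def mat_curve_deriv_def using Uc obl_carrier by blast
  then show ?thesis by blast
qed

lemma is_rgrad_unique:
  assumes Z: "Z \<in> obl n q" and G1: "is_rgrad n q f Z G1" and G2: "is_rgrad n q f Z G2"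
  shows "G1 = G2"
proof -
  have Zc: "Z \<in> carrier_mat n q"
    using Z by (rule obl_carrier)
  have T: "G1 \<in> tangent_obl n q Z" "G2 \<in> tangent_obl n q Z"
    using G1 G2 unfolding is_rgrad_def by auto
  have C: "G1 \<in> carrier_mat n q" "G2 \<in> carrier_mat n q"
    using T by (auto simp: tangent_obl_carrier)
  define U where "U = G1 - G2"
  have Uc: "U \<in> carrier_mat n q"
    unfolding U_def using C by (simp add: minus_carrier_mat)
  have "(U * transpose_mat Z) $$ (i,i) = 0" if "i < n" for i
    using T C Zc that unfolding U_def tangent_obl_def
    by (simp add: minus_mult_distrib_mat[of _ n q])
  then have "U \<in> tangent_obl n q Z"
    unfolding tangent_obl_def using Uc by blast
  then obtain \<gamma> where "obl_curve n q Z U \<gamma>"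
    using obl_curve_exists[OF Z] by blast
  then have "frob G1 U = frob G2 U"
    using G1 G2 DERIV_unique unfolding is_rgrad_def by blast
  then have "frob U U = 0"
    using C Uc unfolding U_def by (simp add: frob_diff_left[of _ n q])
  then have "\<forall>i<n. \<forall>j<q. (G1 - G2) $$ (i,j) = 0"
    using Uc unfolding U_def by (simp add: frob_self_eq_0_iff)
  then show ?thesis
    using C by (intro eq_matI) auto
qed

section \<open>The pulled-back augmented Lagrangian\<close>

locale augmented_lagrangian =
  fixes n m :: nat and As :: "nat \<Rightarrow> real mat" and b :: "real vec" and C :: "real mat"
    and \<sigma> :: real and y :: "real vec" and Xt :: "real mat"
  assumes As_sym: "\<forall>i<m. sym_mat n (As i)" and C_sym: "sym_mat n C" and Xt_sym: "sym_mat n Xt"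
begin

abbreviation "phi \<equiv> Phi n m As b C \<sigma> y Xt"
abbreviation "grad_phi \<equiv> gradPhi n m As b C \<sigma> y Xt"
abbreviation "psi \<equiv> Psi n m As b C \<sigma> y Xt"
abbreviation "Dm \<equiv> Dmat n m As b"
abbreviation "Ay \<equiv> opAstar n m As y"

lemma data_carrier:
  "C \<in> carrier_mat n n" "Xt \<in> carrier_mat n n" "Dm \<in> carrier_mat n n" "Ay \<in> carrier_mat n n"
  using C_sym Xt_sym unfolding sym_mat_def Dmat_def opAstar_def by auto

lemma grad_phi_carrier: "S \<in> carrier_mat n n \<Longrightarrow> grad_phi S \<in> carrier_mat n n"
  using data_carrier unfolding gradPhi_def by (simp add: minus_carrier_mat)

lemma index_grad_phi:
  assumes "S \<in> carrier_mat n n" "i < n" "j < n"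
  shows "grad_phi S $$ (i,j)
    = Xt $$ (i,j) - \<sigma> * (Ay $$ (i,j) - S $$ (i,j) - C $$ (i,j)) + Dm $$ (i,j)"
  using assms data_carrier unfolding gradPhi_def by (simp add: carrier_matD)

lemma grad_phi_sym:
  assumes S: "sym_mat n S"
  shows "sym_mat n (grad_phi S)"
proof (rule sym_matI)
  have Sc: "S \<in> carrier_mat n n"
    using S unfolding sym_mat_def by blast
  then show "grad_phi S \<in> carrier_mat n n"
    by (rule grad_phi_carrier)
  have Ay: "sym_mat n Ay" and Dm: "sym_mat n Dm"
    using sym_mat_opAstar[OF As_sym] unfolding Dmat_def by auto
  fix i j assume ij: "i < n" "j < n"
  show "grad_phi S $$ (j,i) = grad_phi S $$ (i,j)"
    using sym_matD[OF S ij] sym_matD[OF C_sym ij] sym_matD[OF Xt_sym ij] sym_matD[OF Ay ij]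
      sym_matD[OF Dm ij]
    by (simp add: index_grad_phi[OF Sc] ij)
qed

lemma phi_has_real_derivative:
  assumes S: "mat_curve_deriv n n S t0 S'"
  shows "((\<lambda>t. phi (S t)) has_real_derivative frob (grad_phi (S t0)) S') (at t0)"
proof -
  note dims = mat_curve_deriv_dim[OF S]
  let ?R = "\<lambda>t i j. Ay $$ (i,j) - S t $$ (i,j) - C $$ (i,j)"
  have "phi (S t) = (\<Sum>i<n. \<Sum>j<n. Dm $$ (i,j) * (S t $$ (i,j) + C $$ (i,j))
      - Xt $$ (i,j) * ?R t i j + \<sigma> / 2 * (?R t i j)\<^sup>2)" for t
    using dims data_carrier unfolding Phi_def frob_norm_square
    by (simp add: frob_eq_sum[of _ n n] minus_carrier_mat sum_subtractf sum.distrib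
        sum_distrib_left power2_eq_square)
  moreover have "((\<lambda>t. \<Sum>i<n. \<Sum>j<n. Dm $$ (i,j) * (S t $$ (i,j) + C $$ (i,j))
      - Xt $$ (i,j) * ?R t i j + \<sigma> / 2 * (?R t i j)\<^sup>2) has_real_derivative
      (\<Sum>i<n. \<Sum>j<n. (Xt $$ (i,j) - \<sigma> * ?R t0 i j + Dm $$ (i,j)) * S' $$ (i,j))) (at t0)"
    using S unfolding mat_curve_deriv_def
    by (auto intro!: derivative_eq_intros sum.cong simp: field_simps)
  moreover have "frob (grad_phi (S t0)) S'
      = (\<Sum>i<n. \<Sum>j<n. (Xt $$ (i,j) - \<sigma> * ?R t0 i j + Dm $$ (i,j)) * S' $$ (i,j))"
    using dims data_carrier grad_phi_carrier unfolding gradPhi_def by (simp add: frob_eq_sum[of _ n n])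
  ultimately show ?thesis
    by simp
qed

lemma grad_phi_curve_deriv:
  assumes S: "mat_curve_deriv n n S t0 S'"
  shows "mat_curve_deriv n n (\<lambda>t. grad_phi (S t)) t0 (\<sigma> \<cdot>\<^sub>m S')"
  using S mat_curve_deriv_dim[OF S] data_carrier grad_phi_carrier
  unfolding mat_curve_deriv_def gradPhi_def by (auto intro!: derivative_eq_intros)

text \<open>\<open>slack S\<close> is the matrix \<open>X\<close> of the statement, as a function of \<open>S = Y Y\<^sup>T\<close>.\<close>

definition slack :: "real mat \<Rightarrow> real mat" where
  "slack S = grad_phi S - Diag (grad_phi S * S)"

lemma slack_carrier:
  assumes "S \<in> carrier_mat n n"
  shows "slack S \<in> carrier_mat n n"
proof -
  have "grad_phi S * S \<in> carrier_mat n n"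
    using grad_phi_carrier[OF assms] assms by simp
  then show ?thesis
    unfolding slack_def by (intro minus_carrier_mat Diag_carrier_mat)
qed

lemma slack_curve_deriv_stationary:
  assumes S: "mat_curve_deriv n n S t0 (0\<^sub>m n n)"
  shows "mat_curve_deriv n n (\<lambda>t. slack (S t)) t0 (0\<^sub>m n n)"
proof -
  have G: "mat_curve_deriv n n (\<lambda>t. grad_phi (S t)) t0 (0\<^sub>m n n)"
    using grad_phi_curve_deriv[OF S] by simp
  have "grad_phi (S t0) \<in> carrier_mat n n"
    using grad_phi_carrier mat_curve_deriv_dim[OF S] by blast
  then have "mat_curve_deriv n n (\<lambda>t. grad_phi (S t) * S t) t0 (0\<^sub>m n n)"
    using mat_curve_deriv_mult[OF G S] mat_curve_deriv_dim[OF S] by simp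
  from mat_curve_deriv_diff[OF G mat_curve_deriv_Diag[OF this]] show ?thesis
    unfolding slack_def by (simp add: minus_r_inv_mat[OF zero_carrier_mat])
qed

definition rgrad_psi :: "real mat \<Rightarrow> real mat" where
  "rgrad_psi Z = 2 \<cdot>\<^sub>m (slack (Z * transpose_mat Z) * Z)"

lemma rgrad_psi_carrier: "Z \<in> carrier_mat n q \<Longrightarrow> rgrad_psi Z \<in> carrier_mat n q"
  unfolding rgrad_psi_def using slack_carrier[of "Z * transpose_mat Z"] by simp

lemma rgrad_psi_eq_proj_obl:
  assumes Z: "Z \<in> carrier_mat n q"
  shows "rgrad_psi Z = proj_obl Z (2 \<cdot>\<^sub>m (grad_phi (Z * transpose_mat Z) * Z))"
proof -
  define S where "S = Z * transpose_mat Z"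
  define G where "G = grad_phi S"
  have S: "S \<in> carrier_mat n n" and G: "G \<in> carrier_mat n n"
    unfolding S_def G_def using Z grad_phi_carrier by auto
  have DGS: "Diag (G * S) \<in> carrier_mat n n"
    using G S by simp
  have "slack S * Z = G * Z - Diag (G * S) * Z"
    unfolding slack_def G_def[symmetric] using G DGS Z by (rule minus_mult_distrib_mat)
  moreover have "2 \<cdot>\<^sub>m (G * Z) * transpose_mat Z = 2 \<cdot>\<^sub>m (G * S)"
    unfolding S_def using G Z
    by (simp add: mult_smult_assoc_mat[of _ n q] assoc_mult_mat[of _ n q])
  moreover have "Diag (2 \<cdot>\<^sub>m M) = 2 \<cdot>\<^sub>m Diag M" for M :: "real mat"
    unfolding Diag_def by auto
  ultimately show ?thesis
    unfolding rgrad_psi_def proj_obl_def S_def[symmetric] G_def[symmetric]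
    using G Z DGS by (intro eq_matI) (auto simp: mult_smult_assoc_mat[of _ n n])
qed

lemma is_rgrad_psi:
  assumes Z: "Z \<in> obl n q"
  shows "is_rgrad n q psi Z (rgrad_psi Z)"
  unfolding is_rgrad_def
proof (intro conjI allI impI)
  have Zc: "Z \<in> carrier_mat n q"
    using Z by (rule obl_carrier)
  define G where "G = grad_phi (Z * transpose_mat Z)"
  have G: "sym_mat n G"
    unfolding G_def using sym_mat_gram[OF Zc] by (rule grad_phi_sym)
  then have Gc: "G \<in> carrier_mat n n" and GT: "transpose_mat G = G"
    unfolding sym_mat_def by auto
  have W: "2 \<cdot>\<^sub>m (G * Z) \<in> carrier_mat n q"
    using Gc Zc by simp
  show "rgrad_psi Z \<in> tangent_obl n q Z"
    using proj_obl_tangent[OF Z W] rgrad_psi_eq_proj_obl[OF Zc] unfolding G_def by simp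
  fix U \<gamma> assume \<gamma>: "obl_curve n q Z U \<gamma>"
  then have d: "mat_curve_deriv n q \<gamma> 0 U" and \<gamma>0: "\<gamma> 0 = Z"
    unfolding obl_curve_def by auto
  have U: "U \<in> tangent_obl n q Z"
    using \<gamma> by (rule obl_curve_tangent)
  have Uc: "U \<in> carrier_mat n q"
    using U by (rule tangent_obl_carrier)
  have "((\<lambda>t. psi (\<gamma> t)) has_real_derivative
      frob G (U * transpose_mat Z + Z * transpose_mat U)) (at 0)"
    using phi_has_real_derivative[OF mat_curve_deriv_gram[OF d]] \<gamma>0
    unfolding Psi_def G_def by simp
  moreover have "frob G (U * transpose_mat Z + Z * transpose_mat U) = frob (2 \<cdot>\<^sub>m (G * Z)) U"
    using frob_sym_gram_deriv[OF Gc GT Zc Uc] frob_smult_left[of "G * Z" n q U 2] Gc Zc Uc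
    by simp
  moreover have "frob (2 \<cdot>\<^sub>m (G * Z)) U = frob (rgrad_psi Z) U"
    using frob_proj_obl[OF Zc U W] rgrad_psi_eq_proj_obl[OF Zc] unfolding G_def by simp
  ultimately show "((\<lambda>t. psi (\<gamma> t)) has_real_derivative frob (rgrad_psi Z) U) (at 0)"
    by simp
qed

lemma is_rgrad_psi_iff: "Z \<in> obl n q \<Longrightarrow> is_rgrad n q psi Z G \<longleftrightarrow> G = rgrad_psi Z"
  using is_rgrad_psi is_rgrad_unique by blast

lemma frob_rgrad_psi_eq_0:
  assumes Z: "Z \<in> carrier_mat n q" and U: "U \<in> carrier_mat n q"
    and ZU: "Z * transpose_mat U = 0\<^sub>m n n"
  shows "frob U (rgrad_psi Z) = 0"
proof -
  have X: "slack (Z * transpose_mat Z) \<in> carrier_mat n n"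
    using Z by (simp add: slack_carrier)
  have "frob (slack (Z * transpose_mat Z) * Z) U = 0"
    using frob_mult_transpose_right[OF X Z U] mult_transpose_eq_0_swap[OF Z U ZU] X
    by (simp add: frob_eq_sum[of _ n n])
  then show ?thesis
    using frob_comm[OF U rgrad_psi_carrier[OF Z]] X Z U
    by (simp add: rgrad_psi_def frob_smult_left[of _ n q])
qed

lemma rgrad_psi_curve_deriv:
  assumes \<gamma>: "obl_curve n q Z U \<gamma>" and ZU: "Z * transpose_mat U = 0\<^sub>m n n"
  shows "mat_curve_deriv n q (\<lambda>t. rgrad_psi (\<gamma> t)) 0 (2 \<cdot>\<^sub>m (slack (Z * transpose_mat Z) * U))"
proof -
  have d: "mat_curve_deriv n q \<gamma> 0 U" and \<gamma>0: "\<gamma> 0 = Z"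
    using \<gamma> unfolding obl_curve_def by auto
  have Zc: "Z \<in> carrier_mat n q" and Uc: "U \<in> carrier_mat n q"
    using mat_curve_deriv_dim[OF d] \<gamma>0 by auto
  txt \<open>\<open>Z U\<^sup>T = 0\<close> makes the Gram matrix, and with it the slack matrix, stationary.\<close>
  have "mat_curve_deriv n n (\<lambda>t. \<gamma> t * transpose_mat (\<gamma> t)) 0 (0\<^sub>m n n)"
    using mat_curve_deriv_gram[OF d] \<gamma>0 ZU mult_transpose_eq_0_swap[OF Zc Uc ZU] by simp
  then have "mat_curve_deriv n n (\<lambda>t. slack (\<gamma> t * transpose_mat (\<gamma> t))) 0 (0\<^sub>m n n)"
    by (rule slack_curve_deriv_stationary)
  from mat_curve_deriv_smult[OF mat_curve_deriv_mult[OF this d], of 2] show ?thesis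
    using \<gamma>0 Zc Uc slack_carrier[of "Z * transpose_mat Z"] unfolding rgrad_psi_def by simp
qed

lemma is_rhess_psi_iff:
  assumes Z: "Z \<in> obl n q" and U: "U \<in> carrier_mat n q" and ZU: "Z * transpose_mat U = 0\<^sub>m n n"
  shows "is_rhess n q psi Z U H \<longleftrightarrow> H = proj_obl Z (2 \<cdot>\<^sub>m (slack (Z * transpose_mat Z) * U))"
    (is "_ \<longleftrightarrow> H = proj_obl Z ?W")
proof
  have T: "U \<in> tangent_obl n q Z"
    using tangent_obl_if_orthogonal[OF obl_carrier[OF Z] U ZU] .
  assume "is_rhess n q psi Z U H"
  then obtain g where g: "\<And>Y. Y \<in> obl n q \<Longrightarrow> is_rgrad n q psi Y (g Y)"
    and H: "\<And>\<gamma>. obl_curve n q Z U \<gamma> \<Longrightarrow>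
      \<exists>W. mat_curve_deriv n q (\<lambda>t. g (\<gamma> t)) 0 W \<and> H = proj_obl Z W"
    unfolding is_rhess_def by blast
  obtain \<gamma> where \<gamma>: "obl_curve n q Z U \<gamma>"
    using obl_curve_exists[OF Z T] by blast
  have "g (\<gamma> t) = rgrad_psi (\<gamma> t)" for t
    using \<gamma> g is_rgrad_psi_iff unfolding obl_curve_def by blast
  then show "H = proj_obl Z ?W"
    using H[OF \<gamma>] rgrad_psi_curve_deriv[OF \<gamma> ZU] mat_curve_deriv_unique by fastforce
next
  assume "H = proj_obl Z ?W"
  then show "is_rhess n q psi Z U H"
    unfolding is_rhess_def
    using tangent_obl_if_orthogonal[OF obl_carrier[OF Z] U ZU] is_rgrad_psi
      rgrad_psi_curve_deriv[OF _ ZU]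
    by blast
qed

lemma frob_rhess_psi:
  assumes Z: "Z \<in> obl n q" and U: "U \<in> carrier_mat n q" and ZU: "Z * transpose_mat U = 0\<^sub>m n n"
    and H: "is_rhess n q psi Z U H"
  shows "frob U H = 2 * frob (slack (Z * transpose_mat Z) * U) U"
proof -
  have Zc: "Z \<in> carrier_mat n q"
    using Z by (rule obl_carrier)
  have XU: "slack (Z * transpose_mat Z) * U \<in> carrier_mat n q"
    using slack_carrier[of "Z * transpose_mat Z"] Zc U by simp
  have "frob U H = frob H U"
    using H is_rhess_psi_iff[OF Z U ZU] proj_obl_carrier[OF Zc, of "2 \<cdot>\<^sub>m _"] XU U
    by (simp add: frob_comm[of U n q])
  also have "\<dots> = frob (2 \<cdot>\<^sub>m (slack (Z * transpose_mat Z) * U)) U"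
    using H is_rhess_psi_iff[OF Z U ZU] XU
      frob_proj_obl[OF Zc tangent_obl_if_orthogonal[OF Zc U ZU]]
    by simp
  finally show ?thesis
    using XU U by (simp add: frob_smult_left)
qed

end

section \<open>Padding by zero columns\<close>

lemma sum_lessThan_add_split:
  fixes p d :: nat
  shows "(\<Sum>j<p + d. f j) = (\<Sum>j<p. f j) + (\<Sum>j<d. f (p + j) :: 'a :: comm_monoid_add)"
  by (induction d) (simp_all add: add.assoc)

definition zero_pad_right :: "nat \<Rightarrow> 'a :: zero mat \<Rightarrow> 'a mat" where
  "zero_pad_right d Y =
    mat (dim_row Y) (dim_col Y + d) (\<lambda>(i,j). if j < dim_col Y then Y $$ (i,j) else 0)"

definition zero_pad_left :: "nat \<Rightarrow> 'a :: zero mat \<Rightarrow> 'a mat" where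
  "zero_pad_left p V =
    mat (dim_row V) (p + dim_col V) (\<lambda>(i,j). if j < p then 0 else V $$ (i, j - p))"

lemma zero_pad_left_carrier: "V \<in> carrier_mat n d \<Longrightarrow> zero_pad_left p V \<in> carrier_mat n (p + d)"
  unfolding zero_pad_left_def by auto

lemma gram_zero_pad_right:
  fixes Y :: "'a :: comm_semiring_0 mat"
  assumes "Y \<in> carrier_mat n p"
  shows "zero_pad_right d Y * transpose_mat (zero_pad_right d Y) = Y * transpose_mat Y"
  using assms unfolding zero_pad_right_def
  by (intro eq_matI) (auto simp: scalar_prod_def lessThan_atLeast0[symmetric] sum_lessThan_add_split)

lemma obl_zero_pad_right:
  assumes "Y \<in> obl n p"
  shows "zero_pad_right d Y \<in> obl n (p + d)"
  using assms unfolding obl_def zero_pad_right_def by (auto simp: sum_lessThan_add_split)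

lemma zero_pad_right_mult_transpose_zero_pad_left:
  fixes Y V :: "'a :: comm_semiring_0 mat"
  assumes "Y \<in> carrier_mat n p" "V \<in> carrier_mat n d"
  shows "zero_pad_right d Y * transpose_mat (zero_pad_left p V) = 0\<^sub>m n n"
  using assms unfolding zero_pad_right_def zero_pad_left_def
  by (intro eq_matI) (auto simp: scalar_prod_def intro!: sum.neutral)

lemma frob_mult_zero_pad_left:
  assumes X: "X \<in> carrier_mat n n" and V: "V \<in> carrier_mat n d"
  shows "frob (X * zero_pad_left p V) (zero_pad_left p V) = frob (X * V) V"
proof -
  have col: "col (zero_pad_left p V) j = (if j < p then 0\<^sub>v n else col V (j - p))"
    if "j < p + d" for j
    using V that unfolding zero_pad_left_def by (auto intro!: eq_vecI)
  have "frob (X * zero_pad_left p V) (zero_pad_left p V)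
      = (\<Sum>j<p + d. (X *\<^sub>v col (zero_pad_left p V) j) \<bullet> col (zero_pad_left p V) j)"
    using X zero_pad_left_carrier[OF V]
    by (simp add: frob_eq_sum_col[of _ n "p + d"] col_mult2[OF X zero_pad_left_carrier[OF V]]
        del: col_mult)
  also have "\<dots> = (\<Sum>j<d. (X *\<^sub>v col V j) \<bullet> col V j)"
    using X V by (simp add: sum_lessThan_add_split col)
  also have "\<dots> = frob (X * V) V"
    using X V by (simp add: frob_eq_sum_col[of _ n d] col_mult2[OF X V] del: col_mult)
  finally show ?thesis .
qed

lemma frob_mult_neg_eigenvectors:
  fixes X V :: "real mat"
  assumes X: "X \<in> carrier_mat n n" and V: "V \<in> carrier_mat n d" and "d > 0"
    and eig: "\<forall>j<d. \<exists>lam<0. eigenvector X (col V j) lam"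
  shows "frob (X * V) V < 0"
proof -
  have "(X *\<^sub>v col V j) \<bullet> col V j < 0" if j: "j < d" for j
  proof -
    obtain lam where "lam < 0" and ev: "eigenvector X (col V j) lam"
      using eig j by blast
    moreover have "col V j \<bullet> col V j > 0"
      using ev X conjugate_square_greater_0_vec[of "col V j" n] unfolding eigenvector_def by simp
    ultimately show ?thesis
      using ev X unfolding eigenvector_def by (simp add: mult_neg_pos)
  qed
  then have "(\<Sum>j<d. (X *\<^sub>v col V j) \<bullet> col V j) < (\<Sum>j<d. 0)"
    using \<open>d > 0\<close> by (intro sum_strict_mono) auto
  then show ?thesis
    using X V by (simp add: frob_eq_sum_col[of _ n d] col_mult2[OF X V] del: col_mult)
qed

theorem theorem4p5:
  fixes n m p \<delta> :: nat and As :: "nat \<Rightarrow> real mat" and b :: "real vec"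
    and C Xt Y V :: "real mat" and \<sigma> :: real and y :: "real vec"
  assumes "n > 0" and "m > 0"
    and "\<forall>i<m. sym_mat n (As i)"
    and "invertible_mat (opAAstar m As)"
    and "b \<in> carrier_vec m" and "sym_mat n C"
    and "\<sigma> > 0" and "y \<in> carrier_vec m" and "sym_mat n Xt"
    and "p > 0" and "Y \<in> obl n p"
    and "\<not> psd n (gradPhi n m As b C \<sigma> y Xt (Y * transpose_mat Y)
            - Diag (gradPhi n m As b C \<sigma> y Xt (Y * transpose_mat Y) * (Y * transpose_mat Y)))"
    and "\<delta> > 0" and "V \<in> carrier_mat n \<delta>"
    and "\<forall>j<\<delta>. \<exists>lam<0. eigenvector
            (gradPhi n m As b C \<sigma> y Xt (Y * transpose_mat Y)
              - Diag (gradPhi n m As b C \<sigma> y Xt (Y * transpose_mat Y) * (Y * transpose_mat Y)))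
            (col V j) lam"
  shows "let Yh = mat n (p + \<delta>) (\<lambda>(i,j). if j < p then Y $$ (i,j) else 0);
             U = mat n (p + \<delta>) (\<lambda>(i,j). if j < p then 0 else V $$ (i, j - p));
             f = Psi n m As b C \<sigma> y Xt
         in Yh \<in> obl n (p + \<delta>) \<and> U \<in> tangent_obl n (p + \<delta>) Yh
          \<and> (\<exists>G. is_rgrad n (p + \<delta>) f Yh G)
          \<and> (\<forall>G. is_rgrad n (p + \<delta>) f Yh G \<longrightarrow> frob U G = 0)
          \<and> (\<exists>H. is_rhess n (p + \<delta>) f Yh U H)
          \<and> (\<forall>H. is_rhess n (p + \<delta>) f Yh U H \<longrightarrow> frob U H < 0)"
proof -
  interpret augmented_lagrangian n m As b C \<sigma> y Xt
    using assms(3,6,9) by unfold_locales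
  define X where "X = slack (Y * transpose_mat Y)"
  define Yh where "Yh = zero_pad_right \<delta> Y"
  define U where "U = zero_pad_left p V"
  have Yc: "Y \<in> carrier_mat n p"
    using assms(11) by (rule obl_carrier)
  have Yh: "Yh \<in> obl n (p + \<delta>)" and Uc: "U \<in> carrier_mat n (p + \<delta>)"
    unfolding Yh_def U_def
    using obl_zero_pad_right[OF assms(11)] zero_pad_left_carrier[OF assms(14)] .
  have YhU: "Yh * transpose_mat U = 0\<^sub>m n n"
    unfolding Yh_def U_def using Yc assms(14) by (rule zero_pad_right_mult_transpose_zero_pad_left)
  have X: "slack (Yh * transpose_mat Yh) = X" "X \<in> carrier_mat n n"
    unfolding X_def Yh_def using gram_zero_pad_right[OF Yc] slack_carrier Yc by simp_all
  have "frob (X * U) U < 0"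
    unfolding U_def frob_mult_zero_pad_left[OF X(2) assms(14)]
    using frob_mult_neg_eigenvectors[OF X(2) assms(14,13)] assms(15) unfolding X_def slack_def .
  then have "frob U H < 0" if "is_rhess n (p + \<delta>) psi Yh U H" for H
    using frob_rhess_psi[OF Yh Uc YhU that] X by simp
  moreover have "mat n (p + \<delta>) (\<lambda>(i,j). if j < p then Y $$ (i,j) else 0) = Yh"
    "mat n (p + \<delta>) (\<lambda>(i,j). if j < p then 0 else V $$ (i, j - p)) = U"
    unfolding Yh_def U_def zero_pad_right_def zero_pad_left_def using Yc assms(14) by auto
  ultimately show ?thesis
    unfolding Let_def
    using Yh tangent_obl_if_orthogonal[OF obl_carrier[OF Yh] Uc YhU] is_rgrad_psi_iff[OF Yh]
      frob_rgrad_psi_eq_0[OF obl_carrier[OF Yh] Uc YhU] is_rhess_psi_iff[OF Yh Uc YhU]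
    by auto
qed

end
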